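(* For any real continuous function $f\in C(\Omega)$, if $\|[\mathcal D,\pi(M_f)]\|\le1$ then $|Kf-f|\le 1$ and $|Lf-f|\le 1$, where $|\cdot|$ is the $L^2(\mu)$ norm.
   Context: $\Omega=\{0,1\}^{\mathbb N}$ with the shift $\sigma$; for $a\in\{0,1\}$, $ax=(a,x_1,\dots)$. $\mu$ is the measure of maximal entropy (uniform Bernoulli product measure), $L^2(\mu)$ the Hilbert space of square-integrable functions. Ruelle operator $L\phi(x)=\frac12(\phi(0x)+\phi(1x))$; Koopman operator $K\phi=\phi\circ\sigma$. $M_f$ is multiplication $g\mapsto fg$. On $\mathcal H=L^2(\mu)\times L^2(\mu)$ (norm $|(\phi_1,\phi_2)|^2=|\phi_1|^2+|\phi_2|^2$), $\mathcal D=\begin{pmatrix}0&K\\ L&0\end{pmatrix}$, $\pi(A)=\begin{pmatrix}A&0\\0&A\end{pmatrix}$, $[\mathcal D,\pi(A)]=\mathcal D\pi(A)-\pi(A)\mathcal D$; $\|\cdot\|$ is the operator norm. *)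

theory Defs
  imports "HOL-Probability.Probability"
begin

text \<open>Omega = {0,1}^N, encoded as nat => bool (False = 0, True = 1).\<close>
type_synonym omega = "nat \<Rightarrow> bool"

definition Omega_top :: "omega topology" where
  "Omega_top = product_topology (\<lambda>_. discrete_topology (UNIV :: bool set)) UNIV"

definition mu :: "omega measure" where
  "mu = PiM UNIV (\<lambda>_. measure_pmf (pmf_of_set (UNIV :: bool set)))"

definition shift :: "omega \<Rightarrow> omega" where
  "shift x = (\<lambda>n. x (Suc n))"

definition cons :: "bool \<Rightarrow> omega \<Rightarrow> omega" where
  "cons a x = (\<lambda>n. case n of 0 \<Rightarrow> a | Suc m \<Rightarrow> x m)"

definition Koop :: "(omega \<Rightarrow> real) \<Rightarrow> omega \<Rightarrow> real" where
  "Koop \<phi> = \<phi> \<circ> shift"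

definition Ruelle :: "(omega \<Rightarrow> real) \<Rightarrow> omega \<Rightarrow> real" where
  "Ruelle \<phi> x = (\<phi> (cons False x) + \<phi> (cons True x)) / 2"

definition Mult :: "(omega \<Rightarrow> real) \<Rightarrow> (omega \<Rightarrow> real) \<Rightarrow> omega \<Rightarrow> real" where
  "Mult f g = (\<lambda>x. f x * g x)"

definition L2 :: "(omega \<Rightarrow> real) set" where
  "L2 = {\<phi>. \<phi> \<in> borel_measurable mu \<and> integrable mu (\<lambda>x. (\<phi> x)\<^sup>2)}"

definition l2norm :: "(omega \<Rightarrow> real) \<Rightarrow> real" where
  "l2norm \<phi> = sqrt (\<integral>x. (\<phi> x)\<^sup>2 \<partial>mu)"

definition Hnorm :: "(omega \<Rightarrow> real) \<times> (omega \<Rightarrow> real) \<Rightarrow> real" where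
  "Hnorm v = sqrt ((l2norm (fst v))\<^sup>2 + (l2norm (snd v))\<^sup>2)"

definition Dirac :: "(omega \<Rightarrow> real) \<times> (omega \<Rightarrow> real) \<Rightarrow> (omega \<Rightarrow> real) \<times> (omega \<Rightarrow> real)" where
  "Dirac v = (Koop (snd v), Ruelle (fst v))"

definition piRep :: "((omega \<Rightarrow> real) \<Rightarrow> (omega \<Rightarrow> real))
     \<Rightarrow> (omega \<Rightarrow> real) \<times> (omega \<Rightarrow> real) \<Rightarrow> (omega \<Rightarrow> real) \<times> (omega \<Rightarrow> real)" where
  "piRep A v = (A (fst v), A (snd v))"

definition commutator :: "((omega \<Rightarrow> real) \<times> (omega \<Rightarrow> real) \<Rightarrow> (omega \<Rightarrow> real) \<times> (omega \<Rightarrow> real))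
     \<Rightarrow> ((omega \<Rightarrow> real) \<times> (omega \<Rightarrow> real) \<Rightarrow> (omega \<Rightarrow> real) \<times> (omega \<Rightarrow> real))
     \<Rightarrow> (omega \<Rightarrow> real) \<times> (omega \<Rightarrow> real) \<Rightarrow> (omega \<Rightarrow> real) \<times> (omega \<Rightarrow> real)" where
  "commutator S T v = (let a = S (T v); b = T (S v) in
     (\<lambda>x. fst a x - fst b x, \<lambda>x. snd a x - snd b x))"

text \<open>Operator norm on H (extended real, so +infinity for unbounded operators).\<close>
definition opnorm :: "((omega \<Rightarrow> real) \<times> (omega \<Rightarrow> real) \<Rightarrow> (omega \<Rightarrow> real) \<times> (omega \<Rightarrow> real)) \<Rightarrow> ereal" where
  "opnorm T = (SUP v \<in> {v \<in> L2 \<times> L2. Hnorm v \<noteq> 0}. ereal (Hnorm (T v) / Hnorm v))"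

end

theory Submission
  imports Defs
begin

text \<open>Testing the commutator on the unit vectors (0, 1) and (1, 0) of \<open>H\<close> isolates
  \<open>Kf - f\<close> and \<open>Lf - f\<close> respectively, since \<open>K\<close> and \<open>L\<close> both fix the constant function 1.\<close>

lemma prob_space_mu: "prob_space mu"
  unfolding mu_def by (intro prob_space_PiM prob_space_measure_pmf)

lemma const_in_L2: "(\<lambda>x. c) \<in> L2"
proof -
  interpret prob_space mu by (rule prob_space_mu)
  show ?thesis by (simp add: L2_def)
qed

lemma l2norm_const: "l2norm (\<lambda>x. c) = \<bar>c\<bar>"
proof -
  interpret prob_space mu by (rule prob_space_mu)
  show ?thesis by (simp add: l2norm_def prob_space)
qed

lemma l2norm_nonneg: "0 \<le> l2norm g"
  by (simp add: l2norm_def)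

lemma Hnorm_nonneg: "0 \<le> Hnorm v"
  by (simp add: Hnorm_def)

lemma Hnorm_zero_fst: "Hnorm ((\<lambda>x. 0), g) = l2norm g"
  by (simp add: Hnorm_def l2norm_const l2norm_nonneg)

lemma Hnorm_zero_snd: "Hnorm (g, (\<lambda>x. 0)) = l2norm g"
  by (simp add: Hnorm_def l2norm_const l2norm_nonneg)

lemma Hnorm_le_opnorm:
  assumes "opnorm T \<le> ereal c" "v \<in> L2 \<times> L2" "Hnorm v \<noteq> 0"
  shows "Hnorm (T v) \<le> c * Hnorm v"
proof -
  have "ereal (Hnorm (T v) / Hnorm v) \<le> opnorm T"
    unfolding opnorm_def using assms(2,3) by (intro SUP_upper) auto
  with assms(1) have "Hnorm (T v) / Hnorm v \<le> c"
    by (metis ereal_less_eq(3) order_trans)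
  moreover have "0 < Hnorm v"
    using assms(3) Hnorm_nonneg[of v] by linarith
  ultimately show ?thesis
    by (simp add: divide_le_eq)
qed

lemma Koop_const: "Koop (\<lambda>x. c) = (\<lambda>x. c)"
  by (simp add: Koop_def o_def)

lemma Ruelle_const: "Ruelle (\<lambda>x. c) = (\<lambda>x. c)"
  by (simp add: Ruelle_def fun_eq_iff)

lemma commutator_Dirac_Mult:
  "commutator Dirac (piRep (Mult f)) (g, h) =
     ((\<lambda>x. Koop (Mult f h) x - f x * Koop h x), (\<lambda>x. Ruelle (Mult f g) x - f x * Ruelle g x))"
  by (simp add: commutator_def Dirac_def piRep_def Mult_def)

theorem lemma2p19:
  fixes f :: "omega \<Rightarrow> real"
  assumes "continuous_map Omega_top euclideanreal f"
    and "opnorm (commutator Dirac (piRep (Mult f))) \<le> 1"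
  shows "l2norm (\<lambda>x. Koop f x - f x) \<le> 1 \<and> l2norm (\<lambda>x. Ruelle f x - f x) \<le> 1"
proof -
  let ?C = "commutator Dirac (piRep (Mult f))"
  have commutator_bound: "Hnorm (?C v) \<le> 1" if "v \<in> L2 \<times> L2" "Hnorm v = 1" for v
    using Hnorm_le_opnorm[of ?C 1 v] assms(2) that by (simp add: one_ereal_def)
  have "?C ((\<lambda>x. 0), (\<lambda>x. 1)) = ((\<lambda>x. Koop f x - f x), (\<lambda>x. 0))"
    by (simp add: commutator_Dirac_Mult Koop_const Ruelle_const Mult_def)
  then have "l2norm (\<lambda>x. Koop f x - f x) \<le> 1"
    using commutator_bound[of "((\<lambda>x. 0), (\<lambda>x. 1))"]
    by (simp add: const_in_L2 Hnorm_zero_fst Hnorm_zero_snd l2norm_const)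
  moreover have "?C ((\<lambda>x. 1), (\<lambda>x. 0)) = ((\<lambda>x. 0), (\<lambda>x. Ruelle f x - f x))"
    by (simp add: commutator_Dirac_Mult Koop_const Ruelle_const Mult_def)
  then have "l2norm (\<lambda>x. Ruelle f x - f x) \<le> 1"
    using commutator_bound[of "((\<lambda>x. 1), (\<lambda>x. 0))"]
    by (simp add: const_in_L2 Hnorm_zero_fst Hnorm_zero_snd l2norm_const)
  ultimately show ?thesis ..
qed

end
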